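(* For every connected access structure $\mathcal{A}\subseteq 2^P$, $\kappa(\mathcal{A})=\kappa(\mathcal{A}^\perp)$, where $\kappa(\mathcal{A})=\inf\{\sigma(\mathcal M):\mathcal M\text{ is a polymatroid realizing }\mathcal{A}\}$.
   Context: A polymatroid $(f,M)$ consists of a finite set $M$ and a function $f$ on subsets of $M$ with $f(\emptyset)=0$ that is non-negative, monotone and submodular. An access structure on a finite set $P$ is a non-empty upward-closed $\mathcal{A}\subseteq 2^P$ with $\emptyset\notin\mathcal{A}$; its dual is $\mathcal{A}^\perp=\{A\subseteq P: P\setminus A\notin\mathcal{A}\}$. A participant $i$ is important if some $A\notin\mathcal{A}$ has $A\cup\{i\}\in\mathcal{A}$; $\mathcal{A}$ is connected if every participant is important. Let $s\notin P$; juxtaposition denotes union. A polymatroid $(f,sP)$ realizes $\mathcal{A}$ if for every $A\subseteq P$: $A\in\mathcal{A}$ iff $f(sA)=f(A)$, and $A\notin\mathcal{A}$ iff $f(sA)=f(A)+f(s)$. The complexity of a realizing polymatroid is $\sigma(\mathcal M)=\max_{i\in P}f(i)/f(s)$. *)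

theory Defs
  imports Main "HOL-Library.Extended_Real"
begin

text \<open>Participants have type 'a; the dealer s is modelled as None and participant i as Some i,
  so the ground set sP is  insert None (Some ` P).\<close>

definition access_structure :: "'a set \<Rightarrow> 'a set set \<Rightarrow> bool" where
  "access_structure P \<A> \<longleftrightarrow> finite P \<and> \<A> \<subseteq> Pow P \<and> \<A> \<noteq> {} \<and> {} \<notin> \<A> \<and>
     (\<forall>A\<in>\<A>. \<forall>B. A \<subseteq> B \<and> B \<subseteq> P \<longrightarrow> B \<in> \<A>)"

definition dual_as :: "'a set \<Rightarrow> 'a set set \<Rightarrow> 'a set set" where
  "dual_as P \<A> = {A. A \<subseteq> P \<and> P - A \<notin> \<A>}"

definition important :: "'a set \<Rightarrow> 'a set set \<Rightarrow> 'a \<Rightarrow> bool" where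
  "important P \<A> i \<longleftrightarrow> (\<exists>A. A \<subseteq> P \<and> A \<notin> \<A> \<and> insert i A \<in> \<A>)"

definition connected_as :: "'a set \<Rightarrow> 'a set set \<Rightarrow> bool" where
  "connected_as P \<A> \<longleftrightarrow> (\<forall>i\<in>P. important P \<A> i)"

definition polymatroid :: "'b set \<Rightarrow> ('b set \<Rightarrow> real) \<Rightarrow> bool" where
  "polymatroid M f \<longleftrightarrow> finite M \<and> f {} = 0 \<and>
     (\<forall>X. X \<subseteq> M \<longrightarrow> 0 \<le> f X) \<and>
     (\<forall>X Y. X \<subseteq> Y \<and> Y \<subseteq> M \<longrightarrow> f X \<le> f Y) \<and>
     (\<forall>X Y. X \<subseteq> M \<and> Y \<subseteq> M \<longrightarrow> f (X \<union> Y) + f (X \<inter> Y) \<le> f X + f Y)"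

definition realizes :: "'a set \<Rightarrow> 'a set set \<Rightarrow> ('a option set \<Rightarrow> real) \<Rightarrow> bool" where
  "realizes P \<A> f \<longleftrightarrow> polymatroid (insert None (Some ` P)) f \<and>
     (\<forall>A. A \<subseteq> P \<longrightarrow>
        (A \<in> \<A> \<longleftrightarrow> f (insert None (Some ` A)) = f (Some ` A)) \<and>
        (A \<notin> \<A> \<longleftrightarrow> f (insert None (Some ` A)) = f (Some ` A) + f {None}))"

definition complexity :: "'a set \<Rightarrow> ('a option set \<Rightarrow> real) \<Rightarrow> real" where
  "complexity P f = Max ((\<lambda>i. f {Some i} / f {None}) ` P)"

text \<open>Infimum taken in the extended reals (the infimum of the empty set is \<infinity>).\<close>
definition kappa :: "'a set \<Rightarrow> 'a set set \<Rightarrow> ereal" where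
  "kappa P \<A> = Inf {ereal (complexity P f) | f. realizes P \<A> f}"

end

theory Submission
  imports Defs
begin

text \<open>For a polymatroid \<open>f\<close> on \<open>M\<close>, the dual \<open>f\<^sup>*(X) = (\<Sum>x\<in>X. f{x}) + f(M - X) - f(M)\<close> is
  again a polymatroid with \<open>f\<^sup>*{x} \<le> f{x}\<close>, and \<open>f\<^sup>*{s} = f{s}\<close> when \<open>P\<close> is qualified. The gain
  \<open>f\<^sup>*(sA) - f\<^sup>*(A)\<close> equals \<open>f{s}\<close> minus the gain \<open>f(sC) - f(C)\<close> for \<open>C = P - A\<close>, so \<open>f\<^sup>*\<close>
  realizes the dual access structure with no larger complexity. Thus \<open>\<kappa>(\<A>\<^sup>\<bottom>) \<le> \<kappa>(\<A>)\<close>,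
  and equality follows because duality of access structures is an involution.\<close>

lemma Max_image_mono:
  fixes a b :: "'x \<Rightarrow> 'y::linorder"
  assumes "finite P" and "\<And>i. i \<in> P \<Longrightarrow> a i \<le> b i"
  shows "Max (a ` P) \<le> Max (b ` P)"
proof (cases "P = {}")
  case False
  have "a i \<le> Max (b ` P)" if "i \<in> P" for i
    using assms that by (meson Max_ge finite_imageI image_eqI order_trans)
  then show ?thesis using assms(1) False by (simp add: Max_le_iff)
qed simp

lemma polymatroid_nonneg: "polymatroid M f \<Longrightarrow> X \<subseteq> M \<Longrightarrow> 0 \<le> f X"
  unfolding polymatroid_def by blast

lemma polymatroid_mono: "polymatroid M f \<Longrightarrow> X \<subseteq> Y \<Longrightarrow> Y \<subseteq> M \<Longrightarrow> f X \<le> f Y"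
  unfolding polymatroid_def by blast

lemma polymatroid_submodular:
  "polymatroid M f \<Longrightarrow> X \<subseteq> M \<Longrightarrow> Y \<subseteq> M \<Longrightarrow> f (X \<union> Y) + f (X \<inter> Y) \<le> f X + f Y"
  unfolding polymatroid_def by blast

lemma polymatroid_Un_le_sum_singletons:
  assumes "polymatroid M f" and "finite W" and "Z \<union> W \<subseteq> M"
  shows "f (Z \<union> W) \<le> f Z + (\<Sum>w\<in>W. f {w})"
  using assms(2,3)
proof (induction W)
  case (insert w W)
  have "f (Z \<union> insert w W) + f ((Z \<union> W) \<inter> {w}) \<le> f (Z \<union> W) + f {w}"
    using polymatroid_submodular[OF assms(1), of "Z \<union> W" "{w}"] insert.prems by simp
  moreover have "0 \<le> f ((Z \<union> W) \<inter> {w})"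
    by (rule polymatroid_nonneg[OF assms(1)]) (use insert.prems in auto)
  moreover have "f (Z \<union> W) \<le> f Z + (\<Sum>w\<in>W. f {w})"
    using insert.IH insert.prems by simp
  ultimately show ?case using insert.hyps by simp
qed simp

definition dual_polymatroid :: "'b set \<Rightarrow> ('b set \<Rightarrow> real) \<Rightarrow> 'b set \<Rightarrow> real" where
  "dual_polymatroid M f X = (\<Sum>x\<in>X. f {x}) + f (M - X) - f M"

lemma dual_polymatroid_mono:
  assumes "polymatroid M f" and "X \<subseteq> Y" and "Y \<subseteq> M"
  shows "dual_polymatroid M f X \<le> dual_polymatroid M f Y"
proof -
  have "finite M" using assms(1) unfolding polymatroid_def by simp
  then have fin: "finite Y" "finite (Y - X)" using assms(3) finite_subset by blast+
  have "M - X = (M - Y) \<union> (Y - X)" using assms(2,3) by auto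
  then have "f (M - X) \<le> f (M - Y) + (\<Sum>w\<in>Y - X. f {w})"
    using polymatroid_Un_le_sum_singletons[OF assms(1) fin(2), of "M - Y"] assms(3) by auto
  moreover have "(\<Sum>x\<in>Y. f {x}) = (\<Sum>x\<in>X. f {x}) + (\<Sum>x\<in>Y - X. f {x})"
    using fin assms(2) by (metis add.commute sum.subset_diff)
  ultimately show ?thesis unfolding dual_polymatroid_def by linarith
qed

lemma dual_polymatroid_submodular:
  assumes "polymatroid M f" and "X \<subseteq> M" and "Y \<subseteq> M"
  shows "dual_polymatroid M f (X \<union> Y) + dual_polymatroid M f (X \<inter> Y)
    \<le> dual_polymatroid M f X + dual_polymatroid M f Y"
proof -
  have "finite M" using assms(1) unfolding polymatroid_def by simp
  then have "finite X" "finite Y" using assms(2,3) finite_subset by blast+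
  then have sums: "(\<Sum>x\<in>X \<union> Y. f {x}) + (\<Sum>x\<in>X \<inter> Y. f {x}) = (\<Sum>x\<in>X. f {x}) + (\<Sum>x\<in>Y. f {x})"
    by (simp add: sum.union_inter)
  have "f ((M - X) \<union> (M - Y)) + f ((M - X) \<inter> (M - Y)) \<le> f (M - X) + f (M - Y)"
    by (rule polymatroid_submodular[OF assms(1)]) auto
  moreover have "(M - X) \<union> (M - Y) = M - (X \<inter> Y)" "(M - X) \<inter> (M - Y) = M - (X \<union> Y)" by auto
  ultimately show ?thesis using sums unfolding dual_polymatroid_def by simp
qed

lemma polymatroid_dual_polymatroid:
  assumes "polymatroid M f"
  shows "polymatroid M (dual_polymatroid M f)"
proof -
  have empty: "dual_polymatroid M f {} = 0" unfolding dual_polymatroid_def by simp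
  have "0 \<le> dual_polymatroid M f X" if "X \<subseteq> M" for X
    using dual_polymatroid_mono[OF assms empty_subsetI that] empty by simp
  with assms empty show ?thesis
    unfolding polymatroid_def[of M "dual_polymatroid M f"]
    using dual_polymatroid_mono[OF assms] dual_polymatroid_submodular[OF assms]
    by (simp add: polymatroid_def)
qed

lemma dual_polymatroid_singleton_le:
  assumes "polymatroid M f" and "x \<in> M"
  shows "dual_polymatroid M f {x} \<le> f {x}"
  using polymatroid_mono[OF assms(1), of "M - {x}" M] unfolding dual_polymatroid_def by simp

lemma dual_polymatroid_dealer_gap:
  assumes "finite P" and "A \<subseteq> P"
  shows "dual_polymatroid (insert None (Some ` P)) f (insert None (Some ` A))
       - dual_polymatroid (insert None (Some ` P)) f (Some ` A)
     = f {None} - (f (insert None (Some ` (P - A))) - f (Some ` (P - A)))"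
proof -
  let ?M = "insert None (Some ` P)"
  have "?M - insert None (Some ` A) = Some ` (P - A)" "?M - Some ` A = insert None (Some ` (P - A))"
    using assms(2) by auto
  moreover have "(\<Sum>x\<in>insert None (Some ` A). f {x}) = f {None} + (\<Sum>x\<in>Some ` A. f {x})"
    using finite_subset[OF assms(2,1)] by (subst sum.insert) auto
  ultimately show ?thesis unfolding dual_polymatroid_def by simp
qed

lemma realizes_dealer_pos:
  assumes "realizes P \<A> f"
  shows "0 < f {None}"
proof -
  have pm: "polymatroid (insert None (Some ` P)) f" using assms unfolding realizes_def by simp
  then have "f {} = 0" unfolding polymatroid_def by simp
  moreover have "0 \<le> f {None}" by (rule polymatroid_nonneg[OF pm]) simp
  moreover have "({} \<in> \<A> \<longleftrightarrow> f {None} = f {}) \<and> ({} \<notin> \<A> \<longleftrightarrow> f {None} = f {} + f {None})"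
    using assms unfolding realizes_def by (metis empty_subsetI image_empty)
  ultimately show ?thesis by auto
qed

lemma realizes_dual_polymatroid:
  assumes r: "realizes P \<A> f" and "P \<in> \<A>"
  defines "M \<equiv> insert None (Some ` P)"
  shows "realizes P (dual_as P \<A>) (dual_polymatroid M f)"
    and "complexity P (dual_polymatroid M f) \<le> complexity P f"
proof -
  have pm: "polymatroid M f" using r unfolding realizes_def M_def by simp
  then have finP: "finite P" unfolding polymatroid_def M_def by (simp add: finite_image_iff)
  have gap: "(C \<in> \<A> \<longleftrightarrow> f (insert None (Some ` C)) = f (Some ` C)) \<and>
      (C \<notin> \<A> \<longleftrightarrow> f (insert None (Some ` C)) = f (Some ` C) + f {None})" if "C \<subseteq> P" for C
    using r that unfolding realizes_def by blast
  have pos: "0 < f {None}" by (rule realizes_dealer_pos[OF r])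
  have dealer: "dual_polymatroid M f {None} = f {None}"
    using gap[of P] \<open>P \<in> \<A>\<close> unfolding dual_polymatroid_def M_def by simp
  show "realizes P (dual_as P \<A>) (dual_polymatroid M f)"
    unfolding realizes_def
  proof (intro conjI allI impI)
    show "polymatroid (insert None (Some ` P)) (dual_polymatroid M f)"
      using polymatroid_dual_polymatroid[OF pm] by (simp add: M_def)
  next
    fix A assume AP: "A \<subseteq> P"
    have "A \<in> dual_as P \<A> \<longleftrightarrow> P - A \<notin> \<A>" using AP unfolding dual_as_def by simp
    with gap[of "P - A"] dual_polymatroid_dealer_gap[OF finP AP, of f] pos dealer
    show "A \<in> dual_as P \<A> \<longleftrightarrow>
        dual_polymatroid M f (insert None (Some ` A)) = dual_polymatroid M f (Some ` A)"
      and "A \<notin> dual_as P \<A> \<longleftrightarrow> dual_polymatroid M f (insert None (Some ` A))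
        = dual_polymatroid M f (Some ` A) + dual_polymatroid M f {None}"
      unfolding M_def by (cases "P - A \<in> \<A>"; simp)+
  qed
  show "complexity P (dual_polymatroid M f) \<le> complexity P f"
    unfolding complexity_def dealer
  proof (rule Max_image_mono[OF finP])
    fix i assume "i \<in> P"
    then have "dual_polymatroid M f {Some i} \<le> f {Some i}"
      using dual_polymatroid_singleton_le[OF pm] unfolding M_def by simp
    then show "dual_polymatroid M f {Some i} / f {None} \<le> f {Some i} / f {None}"
      using pos by (simp add: divide_right_mono)
  qed
qed

lemma kappa_dual_le:
  assumes "P \<in> \<A>"
  shows "kappa P (dual_as P \<A>) \<le> kappa P \<A>"
  unfolding kappa_def
proof (rule Inf_mono)
  fix b assume "b \<in> {ereal (complexity P f) |f. realizes P \<A> f}"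
  then obtain f where f: "realizes P \<A> f" and b: "b = ereal (complexity P f)" by blast
  let ?g = "dual_polymatroid (insert None (Some ` P)) f"
  have "realizes P (dual_as P \<A>) ?g" and "complexity P ?g \<le> complexity P f"
    using realizes_dual_polymatroid[OF f assms] by simp_all
  with b show "\<exists>a\<in>{ereal (complexity P f) |f. realizes P (dual_as P \<A>) f}. a \<le> b"
    by auto
qed

lemma dual_as_dual_as:
  assumes "\<A> \<subseteq> Pow P"
  shows "dual_as P (dual_as P \<A>) = \<A>"
  using assms unfolding dual_as_def by (auto simp: double_diff)

theorem claim2p13:
  fixes P :: "'a set" and \<A> :: "'a set set"
  assumes "access_structure P \<A>" and "connected_as P \<A>"
  shows "kappa P \<A> = kappa P (dual_as P \<A>)"
proof -
  have "P \<in> \<A>" and "{} \<notin> \<A>" and "\<A> \<subseteq> Pow P"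
    using assms(1) unfolding access_structure_def by blast+
  then have "P \<in> dual_as P \<A>" unfolding dual_as_def by simp
  have "kappa P (dual_as P \<A>) \<le> kappa P \<A>"
    by (rule kappa_dual_le[OF \<open>P \<in> \<A>\<close>])
  moreover have "kappa P \<A> \<le> kappa P (dual_as P \<A>)"
    using kappa_dual_le[OF \<open>P \<in> dual_as P \<A>\<close>] dual_as_dual_as[OF \<open>\<A> \<subseteq> Pow P\<close>] by simp
  ultimately show ?thesis by simp
qed

end
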